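(* Let $P$ be a finite poset and $q$ a positive integer. For every $f\in\mathrm{Inc}^q(P)$, $\mathrm{IncPro}(f)=\mathrm{JdtPro}(f)$.
   Context: $\mathrm{Inc}^q(P)$ is the set of $f:P\to\{1,\dots,q\}$ with $p_1<p_2\Rightarrow f(p_1)<f(p_2)$. For $1\le i\le q-1$, $\rho_i(f)(x)=i+1$ if $f(x)=i$ and changing only the value at $x$ to $i+1$ yields an element of $\mathrm{Inc}^q(P)$; $\rho_i(f)(x)=i$ if $f(x)=i+1$ and changing only the value at $x$ to $i$ yields an element of $\mathrm{Inc}^q(P)$; $\rho_i(f)(x)=f(x)$ otherwise. $\mathrm{IncPro}=\rho_{q-1}\circ\cdots\circ\rho_1$. Jeu de taquin promotion: consider labelings $g:P\to\mathbb{Z}\cup\{\square\}$. The slide $\sigma_i$ is defined (simultaneously at all $x$, using the values of $g$) by $\sigma_i(g)(x)=i$ if $g(x)=\square$ and $g(y)=i$ for some $y\gtrdot x$; $\sigma_i(g)(x)=\square$ if $g(x)=i$ and $g(z)=\square$ for some $z\lessdot x$; $\sigma_i(g)(x)=g(x)$ otherwise. $\sigma_{a\to b}$ replaces every label $a$ by $b$. Set $jdt(f)=\sigma_{\square\to q+1}\circ\sigma_q\circ\sigma_{q-1}\circ\cdots\circ\sigma_2\circ\sigma_{1\to\square}(f)$ and $\mathrm{JdtPro}(f)(x)=jdt(f)(x)-1$. *)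

theory Defs
  imports Main
begin

definition covers :: "'a::order \<Rightarrow> 'a \<Rightarrow> bool" where
  "covers x y \<longleftrightarrow> x < y \<and> \<not> (\<exists>z. x < z \<and> z < y)"
  \<comment> \<open>covers x y means y covers x\<close>

definition Inc :: "nat \<Rightarrow> ('a::order \<Rightarrow> int) set" where
  "Inc q = {f. (\<forall>x. 1 \<le> f x \<and> f x \<le> int q) \<and> (\<forall>x y. x < y \<longrightarrow> f x < f y)}"

definition rho :: "nat \<Rightarrow> int \<Rightarrow> ('a::order \<Rightarrow> int) \<Rightarrow> ('a \<Rightarrow> int)" where
  "rho q i f = (\<lambda>x.
     if f x = i \<and> f(x := i + 1) \<in> Inc q then i + 1
     else if f x = i + 1 \<and> f(x := i) \<in> Inc q then i
     else f x)"

definition IncPro :: "nat \<Rightarrow> ('a::order \<Rightarrow> int) \<Rightarrow> ('a \<Rightarrow> int)" where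
  "IncPro q f = fold (rho q) [1..int q - 1] f"

text \<open>Labelings with values in Z \<union> {box}; None plays the role of the box.\<close>
definition sigma :: "int \<Rightarrow> ('a::order \<Rightarrow> int option) \<Rightarrow> ('a \<Rightarrow> int option)" where
  "sigma i g = (\<lambda>x.
     if g x = None \<and> (\<exists>y. covers x y \<and> g y = Some i) then Some i
     else if g x = Some i \<and> (\<exists>z. covers z x \<and> g z = None) then None
     else g x)"

definition relabel :: "int option \<Rightarrow> int option \<Rightarrow> ('a \<Rightarrow> int option) \<Rightarrow> ('a \<Rightarrow> int option)" where
  "relabel a b g = (\<lambda>x. if g x = a then b else g x)"

text \<open>jdt = sigma_{box->q+1} o sigma_q o ... o sigma_2 o sigma_{1->box}.\<close>
definition jdt :: "nat \<Rightarrow> ('a::order \<Rightarrow> int) \<Rightarrow> ('a \<Rightarrow> int option)" where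
  "jdt q f = relabel None (Some (int q + 1))
              (fold sigma [2..int q] (relabel (Some 1) None (\<lambda>x. Some (f x))))"

definition JdtPro :: "nat \<Rightarrow> ('a::order \<Rightarrow> int) \<Rightarrow> ('a \<Rightarrow> int)" where
  "JdtPro q f = (\<lambda>x. the (jdt q f x) - 1)"

end

theory Submission
  imports Defs
begin

text \<open>Run the two promotions side by side. After \<open>\<rho>\<^sub>1, \<dots>, \<rho>\<^sub>k\<^sub>-\<^sub>1\<close> and
  \<open>\<sigma>\<^sub>1\<^sub>\<rightarrow>\<^sub>\<box>, \<sigma>\<^sub>2, \<dots>, \<sigma>\<^sub>k\<close>, the jeu de taquin labeling is the increasing labeling \<open>h\<close>
  with the label \<open>k\<close> replaced by the box and every smaller label raised by one. The box
  at an element \<open>x\<close> slides up along a cover to a label \<open>k + 1\<close> exactly when \<open>\<rho>\<^sub>k\<close> raises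
  \<open>h x = k\<close>, and a label \<open>k + 1\<close> slides down into a box exactly when \<open>\<rho>\<^sub>k\<close> lowers it,
  because in a finite poset a toggle is blocked iff it is blocked by a cover relation.
  So \<open>\<sigma>\<^sub>k\<^sub>+\<^sub>1\<close> and \<open>\<rho>\<^sub>k\<close> preserve this correspondence, and at \<open>k = q\<close> the final relabeling
  \<open>\<box> \<rightarrow> q + 1\<close> followed by subtracting one yields \<open>IncPro f\<close>.\<close>

lemma exists_cover_above:
  fixes x y :: "'a::{finite,order}"
  assumes "x < y"
  shows "\<exists>z. covers x z \<and> z \<le> y"
proof -
  let ?A = "{z. x < z \<and> z \<le> y}"
  have "finite ?A" "?A \<noteq> {}" using assms by auto
  then obtain m where m: "m \<in> ?A" "\<forall>b\<in>?A. b \<le> m \<longrightarrow> m = b"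
    using finite_has_minimal by blast
  then have "covers x m"
    unfolding covers_def by (metis (mono_tags, lifting) less_le_not_le mem_Collect_eq order.trans)
  with m show ?thesis by auto
qed

lemma exists_cover_below:
  fixes x y :: "'a::{finite,order}"
  assumes "y < x"
  shows "\<exists>z. covers z x \<and> y \<le> z"
proof -
  let ?A = "{z. z < x \<and> y \<le> z}"
  have "finite ?A" "?A \<noteq> {}" using assms by auto
  then obtain m where m: "m \<in> ?A" "\<forall>b\<in>?A. m \<le> b \<longrightarrow> m = b"
    using finite_has_maximal by blast
  then have "covers m x"
    unfolding covers_def by (metis (mono_tags, lifting) less_le_not_le mem_Collect_eq order.trans)
  with m show ?thesis by auto
qed

lemma Inc_fun_upd_iff:
  assumes "h \<in> Inc q" and "1 \<le> v" "v \<le> int q"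
  shows "h(x := v) \<in> Inc q \<longleftrightarrow> (\<forall>y. x < y \<longrightarrow> v < h y) \<and> (\<forall>y. y < x \<longrightarrow> h y < v)"
proof
  assume "h(x := v) \<in> Inc q"
  then have upd_mono: "\<And>a b. a < b \<Longrightarrow> (h(x := v)) a < (h(x := v)) b"
    unfolding Inc_def by blast
  show "(\<forall>y. x < y \<longrightarrow> v < h y) \<and> (\<forall>y. y < x \<longrightarrow> h y < v)"
  proof (intro conjI allI impI)
    fix y
    show "v < h y" if "x < y" using upd_mono[OF that] that by (auto dest: less_imp_neq)
    show "h y < v" if "y < x" using upd_mono[OF that] that by (auto dest: less_imp_neq)
  qed
next
  assume "(\<forall>y. x < y \<longrightarrow> v < h y) \<and> (\<forall>y. y < x \<longrightarrow> h y < v)"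
  with assms show "h(x := v) \<in> Inc q"
    unfolding Inc_def by auto
qed

lemma Inc_raise_iff_no_cover:
  fixes h :: "'a::{finite,order} \<Rightarrow> int"
  assumes h: "h \<in> Inc q" and hx: "h x = k" and kq: "k < int q"
  shows "h(x := k + 1) \<in> Inc q \<longleftrightarrow> \<not> (\<exists>y. covers x y \<and> h y = k + 1)"
proof -
  have mono: "\<And>a b. a < b \<Longrightarrow> h a < h b" and "1 \<le> k"
    using h hx unfolding Inc_def by auto
  have "(\<forall>y. x < y \<longrightarrow> k + 1 < h y) \<longleftrightarrow> \<not> (\<exists>y. covers x y \<and> h y = k + 1)"
  proof
    assume "\<forall>y. x < y \<longrightarrow> k + 1 < h y"
    then show "\<not> (\<exists>y. covers x y \<and> h y = k + 1)"
      unfolding covers_def by fastforce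
  next
    assume no_cover: "\<not> (\<exists>y. covers x y \<and> h y = k + 1)"
    show "\<forall>y. x < y \<longrightarrow> k + 1 < h y"
    proof (intro allI impI)
      fix y assume "x < y"
      then obtain z where z: "covers x z" "z \<le> y"
        using exists_cover_above by blast
      have "k < h z" using mono[of x z] z(1) hx unfolding covers_def by simp
      moreover have "h z \<le> h y" using mono[of z y] z(2) by (cases "z = y") (auto simp: order.order_iff_strict)
      moreover have "h y \<noteq> k + 1 \<or> h z \<noteq> k + 1" using no_cover z(1) by auto
      ultimately show "k + 1 < h y" using mono[OF \<open>x < y\<close>] hx by auto
    qed
  qed
  moreover have "\<forall>y. y < x \<longrightarrow> h y < k + 1" using mono hx by force
  ultimately show ?thesis
    using Inc_fun_upd_iff[OF h] \<open>1 \<le> k\<close> kq by auto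
qed

lemma Inc_lower_iff_no_cover:
  fixes h :: "'a::{finite,order} \<Rightarrow> int"
  assumes h: "h \<in> Inc q" and hx: "h x = k + 1" and k: "1 \<le> k"
  shows "h(x := k) \<in> Inc q \<longleftrightarrow> \<not> (\<exists>z. covers z x \<and> h z = k)"
proof -
  have mono: "\<And>a b. a < b \<Longrightarrow> h a < h b" and "h x \<le> int q"
    using h unfolding Inc_def by auto
  with hx have "k < int q" by simp
  have "(\<forall>y. y < x \<longrightarrow> h y < k) \<longleftrightarrow> \<not> (\<exists>z. covers z x \<and> h z = k)"
  proof
    assume "\<forall>y. y < x \<longrightarrow> h y < k"
    then show "\<not> (\<exists>z. covers z x \<and> h z = k)"
      unfolding covers_def by fastforce
  next
    assume no_cover: "\<not> (\<exists>z. covers z x \<and> h z = k)"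
    show "\<forall>y. y < x \<longrightarrow> h y < k"
    proof (intro allI impI)
      fix y assume "y < x"
      then obtain z where z: "covers z x" "y \<le> z"
        using exists_cover_below by blast
      have "h z < k + 1" using mono[of z x] z(1) hx unfolding covers_def by simp
      moreover have "h y \<le> h z" using mono[of y z] z(2) by (cases "y = z") (auto simp: order.order_iff_strict)
      moreover have "h y \<noteq> k \<or> h z \<noteq> k" using no_cover z(1) by auto
      ultimately show "h y < k" using mono[OF \<open>y < x\<close>] hx by auto
    qed
  qed
  moreover have "\<forall>y. x < y \<longrightarrow> k < h y" using mono hx by force
  ultimately show ?thesis
    using Inc_fun_upd_iff[OF h] k \<open>k < int q\<close> by auto
qed

lemma rho_Inc:
  fixes h :: "'a::order \<Rightarrow> int"
  assumes h: "h \<in> Inc q"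
  shows "rho q k h \<in> Inc q"
  unfolding Inc_def
proof (intro CollectI conjI allI impI)
  fix z
  have "1 \<le> g z \<and> g z \<le> int q" if "g \<in> Inc q" for g :: "'a \<Rightarrow> int"
    using that unfolding Inc_def by blast
  from this[OF h] this[of "h(z := k + 1)"] this[of "h(z := k)"]
  show "1 \<le> rho q k h z" "rho q k h z \<le> int q"
    unfolding rho_def by auto
next
  fix a b :: 'a assume ab: "a < b"
  have "g a < g b" if "g \<in> Inc q" for g :: "'a \<Rightarrow> int"
    using that ab unfolding Inc_def by blast
  from this[OF h] this[of "h(a := k + 1)"] this[of "h(b := k)"]
  show "rho q k h a < rho q k h b"
    using ab unfolding rho_def by (auto split: if_splits)
qed

lemma fold_rho_Inc: "h \<in> Inc q \<Longrightarrow> fold (rho q) ks h \<in> Inc q"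
  by (induction ks arbitrary: h) (simp_all add: rho_Inc)

definition slide_state :: "int \<Rightarrow> ('a \<Rightarrow> int) \<Rightarrow> ('a \<Rightarrow> int option)" where
  "slide_state k h = (\<lambda>x. if h x = k then None else if h x < k then Some (h x + 1) else Some (h x))"

lemma sigma_slide_state:
  fixes h :: "'a::{finite,order} \<Rightarrow> int"
  assumes h: "h \<in> Inc q" and k: "1 \<le> k" "k < int q"
  shows "sigma (k + 1) (slide_state k h) = slide_state (k + 1) (rho q k h)"
proof
  fix x
  have "\<And>y. slide_state k h y = Some (k + 1) \<longleftrightarrow> h y = k + 1"
   and "\<And>y. slide_state k h y = None \<longleftrightarrow> h y = k"
    by (auto simp: slide_state_def)
  then have slide_up: "(\<exists>y. covers x y \<and> slide_state k h y = Some (k + 1)) \<longleftrightarrow> (\<exists>y. covers x y \<and> h y = k + 1)"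
   and slide_down: "(\<exists>z. covers z x \<and> slide_state k h z = None) \<longleftrightarrow> (\<exists>z. covers z x \<and> h z = k)"
    by simp_all
  consider "h x = k" | "h x = k + 1" | "h x \<noteq> k" "h x \<noteq> k + 1" by blast
  then show "sigma (k + 1) (slide_state k h) x = slide_state (k + 1) (rho q k h) x"
  proof cases
    case 1
    then show ?thesis using Inc_raise_iff_no_cover[OF h 1 k(2)] slide_up
      by (auto simp: sigma_def rho_def slide_state_def)
  next
    case 2
    then show ?thesis using Inc_lower_iff_no_cover[OF h 2 k(1)] slide_down
      by (auto simp: sigma_def rho_def slide_state_def)
  qed (auto simp: sigma_def rho_def slide_state_def)
qed

lemma fold_sigma_slide_state:
  fixes h :: "'a::{finite,order} \<Rightarrow> int"
  assumes "m \<le> int q" "1 \<le> m" "h \<in> Inc q"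
  shows "fold sigma [m + 1..int q] (slide_state m h) = slide_state (int q) (fold (rho q) [m..int q - 1] h)"
  using assms
proof (induction m arbitrary: h rule: int_le_induct)
  case base
  then show ?case by simp
next
  case (step m)
  have "fold sigma [m..int q] (slide_state (m - 1) h)
      = fold sigma [m + 1..int q] (sigma m (slide_state (m - 1) h))"
    using step.hyps by (simp add: upto_rec1)
  also have "\<dots> = fold sigma [m + 1..int q] (slide_state m (rho q (m - 1) h))"
    using sigma_slide_state[OF step.prems(2), of "m - 1"] step by simp
  also have "\<dots> = slide_state (int q) (fold (rho q) [m..int q - 1] (rho q (m - 1) h))"
    using step.IH step.prems by (simp add: rho_Inc)
  also have "\<dots> = slide_state (int q) (fold (rho q) [m - 1..int q - 1] h)"
    using step.hyps by (simp add: upto_rec1)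
  finally show ?case by simp
qed

theorem theorem3p8:
  fixes f :: "'a::{finite,order} \<Rightarrow> int" and q :: nat
  assumes "q \<ge> 1" and "f \<in> Inc q"
  shows "IncPro q f = JdtPro q f"
proof
  fix x
  have range: "1 \<le> g x \<and> g x \<le> int q" if "g \<in> Inc q" for g :: "'a \<Rightarrow> int" and x
    using that unfolding Inc_def by blast
  have "relabel (Some 1) None (\<lambda>x. Some (f x)) = slide_state 1 f"
  proof
    fix y show "relabel (Some 1) None (\<lambda>x. Some (f x)) y = slide_state 1 f y"
      using range[OF assms(2), of y] by (auto simp: relabel_def slide_state_def)
  qed
  moreover have "fold sigma [2..int q] (slide_state 1 f) = slide_state (int q) (IncPro q f)"
    using fold_sigma_slide_state[OF _ _ assms(2), of 1] assms(1) by (simp add: IncPro_def)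
  ultimately have "jdt q f = relabel None (Some (int q + 1)) (slide_state (int q) (IncPro q f))"
    by (simp add: jdt_def)
  moreover have "IncPro q f \<in> Inc q"
    using fold_rho_Inc[OF assms(2)] by (simp add: IncPro_def)
  ultimately show "IncPro q f x = JdtPro q f x"
    using range[of "IncPro q f" x] by (auto simp: JdtPro_def relabel_def slide_state_def)
qed

end
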